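(* Let $F|R$ be an extension of ordered fields with canonical valuation $v$, and let $D<E$ be non-empty subsets of $R$. Assume that either $(D,E)$ is a non-ball cut in $R$ with $\mathrm{Betw}_F(D,E)\neq\emptyset$, or $(D,E)$ is a ball complement in $R$. Then $\mathrm{Betw}_F(D,E)=B_S(a,F)$ for each $a\in\mathrm{Betw}_F(D,E)$, where $S$ is the largest final segment of $vF$ disjoint from $v(E-D)$ (equivalently, the largest subset $S$ of $vF$ with $S>v(E-D)$).
   Context: The canonical valuation $v$ of an ordered field has as valuation ring the convex hull of $\mathbb Z$. $\mathrm{Betw}_F(D,E)=\{c\in F\mid D<c<E\}$ and $v(E-D)=\{v(e-d)\mid e\in E,d\in D\}$. For an ordered field $K$, $a\in K$ and a final segment $S$ of $vK$ (possibly empty), $B_S(a,K)=\{b\in K\mid v(a-b)\in S\cup\{\infty\}\}$ is a ball. A ball complement of a ball $B$ of $R$ is a pair $(D,E)$ with $D<B<E$ and $D\cup B\cup E=R$. A cut of $R$ is a pair $(D,E)$ with $D<E$ and $D\cup E=R$; for nonempty $A\subseteq R$, $A^+=(D,R\setminus D)$ with $D$ the smallest initial segment containing $A$, and $A^-=(R\setminus E,E)$ with $E$ the smallest final segment containing $A$; a cut is a ball cut if it is $B^+$ or $B^-$ for some ball $B$, and a non-ball cut otherwise. *)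

theory Defs
  imports Main
begin

text \<open>The ordered field F is the type 'a (class linordered_field); R is an ordered
subfield given as a subset carrying the induced order.
Canonical valuation: v x \<le> v y iff y/x lies in the convex hull O of Z, i.e.
|y| \<le> n |x| for some natural n. The value v x is represented by the
archimedean class of x; v 0 = {0} plays the role of infinity.\<close>

definition subfield :: "'a::linordered_field set \<Rightarrow> bool" where
  "subfield R \<longleftrightarrow> 0 \<in> R \<and> 1 \<in> R \<and> (\<forall>x\<in>R. \<forall>y\<in>R. x + y \<in> R \<and> x * y \<in> R)
     \<and> (\<forall>x\<in>R. - x \<in> R \<and> inverse x \<in> R)"

definition vle :: "'a::linordered_field \<Rightarrow> 'a \<Rightarrow> bool" where
  "vle x y \<longleftrightarrow> (\<exists>n::nat. \<bar>y\<bar> \<le> of_nat n * \<bar>x\<bar>)"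

definition vval :: "'a::linordered_field \<Rightarrow> 'a set" where
  "vval x = {y. vle x y \<and> vle y x}"

definition vgroup :: "'a::linordered_field set \<Rightarrow> 'a set set" where
  "vgroup K = vval ` (K - {0})"

definition vclass_le :: "'a::linordered_field set \<Rightarrow> 'a set \<Rightarrow> bool" where
  "vclass_le A B \<longleftrightarrow> (\<exists>x\<in>A. \<exists>y\<in>B. vle x y)"

definition vclass_less :: "'a::linordered_field set \<Rightarrow> 'a set \<Rightarrow> bool" where
  "vclass_less A B \<longleftrightarrow> vclass_le A B \<and> A \<noteq> B"

definition final_segment :: "'a::linordered_field set set \<Rightarrow> 'a set set \<Rightarrow> bool" where
  "final_segment G S \<longleftrightarrow> S \<subseteq> G \<and> (\<forall>\<gamma>\<in>S. \<forall>\<delta>\<in>G. vclass_le \<gamma> \<delta> \<longrightarrow> \<delta> \<in> S)"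

definition ballV :: "'a::linordered_field set \<Rightarrow> 'a set set \<Rightarrow> 'a \<Rightarrow> 'a set" where
  "ballV K S a = {b\<in>K. a - b = 0 \<or> vval (a - b) \<in> S}"

definition is_ball :: "'a::linordered_field set \<Rightarrow> 'a set \<Rightarrow> bool" where
  "is_ball K B \<longleftrightarrow> (\<exists>a\<in>K. \<exists>S. final_segment (vgroup K) S \<and> B = ballV K S a)"

definition Betw :: "'a::linordered_field set \<Rightarrow> 'a set \<Rightarrow> 'a set \<Rightarrow> 'a set" where
  "Betw F D E = {c\<in>F. (\<forall>d\<in>D. d < c) \<and> (\<forall>e\<in>E. c < e)}"

definition vdiff :: "'a::linordered_field set \<Rightarrow> 'a set \<Rightarrow> 'a set set" where
  "vdiff E D = {vval (e - d) | e d. e \<in> E \<and> d \<in> D}"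

definition set_less :: "'a::linordered_field set \<Rightarrow> 'a set \<Rightarrow> bool" where
  "set_less A B \<longleftrightarrow> (\<forall>x\<in>A. \<forall>y\<in>B. x < y)"

definition is_cut :: "'a::linordered_field set \<Rightarrow> 'a set \<Rightarrow> 'a set \<Rightarrow> bool" where
  "is_cut R D E \<longleftrightarrow> set_less D E \<and> D \<union> E = R"

definition upper_cut :: "'a::linordered_field set \<Rightarrow> 'a set \<Rightarrow> 'a set \<times> 'a set" where
  "upper_cut R A = (let D = {x\<in>R. \<exists>a\<in>A. x \<le> a} in (D, R - D))"

definition lower_cut :: "'a::linordered_field set \<Rightarrow> 'a set \<Rightarrow> 'a set \<times> 'a set" where
  "lower_cut R A = (let E = {x\<in>R. \<exists>a\<in>A. a \<le> x} in (R - E, E))"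

definition ball_cut :: "'a::linordered_field set \<Rightarrow> 'a set \<Rightarrow> 'a set \<Rightarrow> bool" where
  "ball_cut R D E \<longleftrightarrow> is_cut R D E \<and>
     (\<exists>B. is_ball R B \<and> ((D, E) = upper_cut R B \<or> (D, E) = lower_cut R B))"

definition non_ball_cut :: "'a::linordered_field set \<Rightarrow> 'a set \<Rightarrow> 'a set \<Rightarrow> bool" where
  "non_ball_cut R D E \<longleftrightarrow> is_cut R D E \<and> \<not> ball_cut R D E"

definition ball_complement ::
  "'a::linordered_field set \<Rightarrow> 'a set \<Rightarrow> 'a set \<Rightarrow> 'a set \<Rightarrow> bool" where
  "ball_complement R B D E \<longleftrightarrow> set_less D B \<and> set_less B E \<and> D \<union> B \<union> E = R"

end

theory Submission
  imports Defs
begin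

text \<open>Call x gap-infinitesimal if n\<bar>x\<bar> < e - d for all n and all e \<in> E, d \<in> D; by the
characterisation of the order on values, B_S(a,F) consists exactly of the b with a - b
gap-infinitesimal. If every gap e - d can be halved within (D,E), two points of
Betw_F(D,E) lie in gaps of size (e - d)/2^n, so their difference is gap-infinitesimal.
Conversely, if every d \<in> D is exceeded within D by a non-infinitesimal amount, and
dually for E, then moving a point of Betw_F(D,E) by a gap-infinitesimal amount cannot
cross D or E. For a ball complement with centre c these three properties come from the
midpoint (x + c)/2 and the reflection 2c - x of x \<in> D \<union> E, which have the same
value distance to c as x and hence stay outside the ball. For a non-ball cut halving
uses the midpoint of d and e, and a failure of the other two properties would exhibit
(D,E) as B^+ or B^- for the ball B of gap-infinitesimal neighbours of a point.\<close>

lemma subfield_UNIV: "subfield (UNIV :: 'a::linordered_field set)"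
  unfolding subfield_def by simp

lemma subfield_add: "subfield R \<Longrightarrow> x \<in> R \<Longrightarrow> y \<in> R \<Longrightarrow> x + y \<in> R"
  unfolding subfield_def by blast

lemma subfield_diff: "subfield R \<Longrightarrow> x \<in> R \<Longrightarrow> y \<in> R \<Longrightarrow> x - y \<in> R"
  unfolding subfield_def by (metis diff_conv_add_uminus)

lemma subfield_midpoint:
  assumes R: "subfield R" and "x \<in> R" "y \<in> R"
  shows "(x + y) / 2 \<in> R"
proof -
  have "(2 :: 'a) \<in> R" using R subfield_add[OF R, of 1 1] unfolding subfield_def by simp
  then have "inverse 2 \<in> R" using R unfolding subfield_def by blast
  then show ?thesis
    using R subfield_add[OF assms] unfolding subfield_def divide_inverse by blast
qed

lemma vle_refl: "vle x (x::'a::linordered_field)"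
  unfolding vle_def by (rule exI[of _ 1]) simp

lemma vle_trans:
  assumes "vle x y" "vle y (z::'a::linordered_field)" shows "vle x z"
proof -
  obtain n where n: "\<bar>y\<bar> \<le> of_nat n * \<bar>x\<bar>" using assms(1) unfolding vle_def by blast
  obtain m where m: "\<bar>z\<bar> \<le> of_nat m * \<bar>y\<bar>" using assms(2) unfolding vle_def by blast
  have "\<bar>z\<bar> \<le> of_nat m * (of_nat n * \<bar>x\<bar>)"
    using m n by (meson mult_left_mono of_nat_0_le_iff order_trans)
  then have "\<bar>z\<bar> \<le> of_nat (m * n) * \<bar>x\<bar>" by (simp add: mult.assoc)
  then show ?thesis unfolding vle_def by blast
qed

lemma vval_eq_iff: "vval x = vval (y::'a::linordered_field) \<longleftrightarrow> vle x y \<and> vle y x"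
proof
  assume "vval x = vval y"
  moreover have "y \<in> vval y" unfolding vval_def using vle_refl by blast
  ultimately show "vle x y \<and> vle y x" unfolding vval_def by blast
next
  assume "vle x y \<and> vle y x"
  then show "vval x = vval y" unfolding vval_def using vle_trans by blast
qed

lemma vclass_le_vval_iff: "vclass_le (vval x) (vval y) \<longleftrightarrow> vle x (y::'a::linordered_field)"
  unfolding vclass_le_def vval_def using vle_refl vle_trans by blast

lemma vclass_less_vval_iff:
  "vclass_less (vval x) (vval y) \<longleftrightarrow> (\<forall>n::nat. of_nat n * \<bar>y\<bar> < \<bar>x::'a::linordered_field\<bar>)"
proof -
  have "vclass_less (vval x) (vval y) \<longleftrightarrow> vle x y \<and> \<not> vle y x"
    unfolding vclass_less_def vclass_le_vval_iff vval_eq_iff by blast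
  moreover have "\<not> vle y x \<longleftrightarrow> (\<forall>n::nat. of_nat n * \<bar>y\<bar> < \<bar>x\<bar>)"
    unfolding vle_def by (auto simp: not_le)
  moreover have "(\<forall>n::nat. of_nat n * \<bar>y\<bar> < \<bar>x\<bar>) \<Longrightarrow> vle x y"
    unfolding vle_def by (metis less_imp_le of_nat_1 mult_1)
  ultimately show ?thesis by blast
qed

lemma vclass_less_le_trans:
  assumes "vclass_less (vval x) (vval y)" "vclass_le (vval y) (vval z)"
  shows "vclass_less (vval x) (vval (z::'a::linordered_field))"
proof -
  obtain m where m: "\<bar>z\<bar> \<le> of_nat m * \<bar>y\<bar>"
    using assms(2) unfolding vclass_le_vval_iff vle_def by blast
  show ?thesis unfolding vclass_less_vval_iff
  proof
    fix n :: nat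
    have "of_nat n * \<bar>z\<bar> \<le> of_nat (n * m) * \<bar>y\<bar>"
      using m by (simp add: mult_left_mono mult.assoc)
    also have "\<dots> < \<bar>x\<bar>" using assms(1) unfolding vclass_less_vval_iff by blast
    finally show "of_nat n * \<bar>z\<bar> < \<bar>x\<bar>" .
  qed
qed

lemma vval_half: "vval ((x::'a::linordered_field) / 2) = vval x"
proof -
  have "\<bar>x\<bar> \<le> of_nat 2 * \<bar>x / 2\<bar>" "\<bar>x / 2\<bar> \<le> of_nat 1 * \<bar>x\<bar>" by simp_all
  then show ?thesis unfolding vval_eq_iff vle_def by blast
qed

lemma vval_minus: "vval (- (x::'a::linordered_field)) = vval x"
proof -
  have "\<bar>- x\<bar> \<le> of_nat 1 * \<bar>x\<bar>" "\<bar>x\<bar> \<le> of_nat 1 * \<bar>- x\<bar>" by simp_all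
  then show ?thesis unfolding vval_eq_iff vle_def by blast
qed

definition gap_infinitesimal :: "'a::linordered_field set \<Rightarrow> 'a set \<Rightarrow> 'a \<Rightarrow> bool" where
  "gap_infinitesimal D E x \<longleftrightarrow> (\<forall>e\<in>E. \<forall>d\<in>D. \<forall>n::nat. of_nat n * \<bar>x\<bar> < e - d)"

definition above_gaps :: "'a::linordered_field set \<Rightarrow> 'a set \<Rightarrow> 'a set \<Rightarrow> 'a set set" where
  "above_gaps K D E = {\<gamma>\<in>vgroup K. \<forall>\<delta>\<in>vdiff E D. vclass_less \<delta> \<gamma>}"

lemma gap_infinitesimal_zero: "set_less D E \<Longrightarrow> gap_infinitesimal D E 0"
  unfolding gap_infinitesimal_def set_less_def by simp

lemma gap_infinitesimal_minus_iff: "gap_infinitesimal D E (- x) \<longleftrightarrow> gap_infinitesimal D E x"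
  unfolding gap_infinitesimal_def by simp

lemma not_gap_infinitesimal_gap:
  assumes "d \<in> D" "e \<in> E" shows "\<not> gap_infinitesimal D E (e - d)"
  using assms unfolding gap_infinitesimal_def by (metis less_irrefl abs_ge_self of_nat_1 mult_1 not_le)

lemma gap_infinitesimal_abs_less:
  assumes "gap_infinitesimal D E x" "\<not> gap_infinitesimal D E y"
  shows "\<bar>x\<bar> < \<bar>y\<bar>"
proof -
  obtain e d n where "e \<in> E" "d \<in> D" "e - d \<le> of_nat n * \<bar>y\<bar>"
    using assms(2) unfolding gap_infinitesimal_def by (auto simp: not_less)
  moreover from calculation have "of_nat n * \<bar>x\<bar> < e - d"
    using assms(1) unfolding gap_infinitesimal_def by blast
  ultimately have "of_nat n * \<bar>x\<bar> < of_nat n * \<bar>y\<bar>" by linarith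
  then show ?thesis by (meson mult_left_mono not_le of_nat_0_le_iff)
qed

lemma mem_ballV_above_gaps_iff:
  assumes K: "subfield K" and "a \<in> K" and DE: "set_less D E"
  shows "b \<in> ballV K (above_gaps K D E) a \<longleftrightarrow> b \<in> K \<and> gap_infinitesimal D E (a - b)"
proof (cases "b \<in> K \<and> a - b \<noteq> 0")
  case True
  have pos: "\<bar>e - d\<bar> = e - d" if "e \<in> E" "d \<in> D" for e d
    using DE that unfolding set_less_def by fastforce
  have "(\<forall>\<delta>\<in>vdiff E D. vclass_less \<delta> (vval (a - b)))
      \<longleftrightarrow> (\<forall>e\<in>E. \<forall>d\<in>D. vclass_less (vval (e - d)) (vval (a - b)))"
    unfolding vdiff_def by blast
  also have "\<dots> \<longleftrightarrow> gap_infinitesimal D E (a - b)"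
    unfolding gap_infinitesimal_def vclass_less_vval_iff using pos by simp
  finally show ?thesis
    using True subfield_diff[OF K \<open>a \<in> K\<close>]
    unfolding ballV_def above_gaps_def vgroup_def by auto
next
  case False
  then show ?thesis using gap_infinitesimal_zero[OF DE] unfolding ballV_def by auto
qed

lemma final_segment_above_gaps: "final_segment (vgroup K) (above_gaps K D E)"
  unfolding final_segment_def above_gaps_def vgroup_def vdiff_def
  using vclass_less_le_trans by fastforce

subsection \<open>Conditions on D < E under which Betw is a ball\<close>

definition gaps_halvable :: "'a::linordered_field set \<Rightarrow> 'a set \<Rightarrow> bool" where
  "gaps_halvable D E \<longleftrightarrow> (\<forall>d\<in>D. \<forall>e\<in>E. \<exists>d'\<in>D. \<exists>e'\<in>E. 2 * (e' - d') \<le> e - d)"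

definition gap_open_above :: "'a::linordered_field set \<Rightarrow> 'a set \<Rightarrow> bool" where
  "gap_open_above D E \<longleftrightarrow> (\<forall>d\<in>D. \<exists>d'\<in>D. d < d' \<and> \<not> gap_infinitesimal D E (d' - d))"

definition gap_open_below :: "'a::linordered_field set \<Rightarrow> 'a set \<Rightarrow> bool" where
  "gap_open_below D E \<longleftrightarrow> (\<forall>e\<in>E. \<exists>e'\<in>E. e' < e \<and> \<not> gap_infinitesimal D E (e - e'))"

lemma gaps_halvable_power:
  assumes "gaps_halvable D E" "d \<in> D" "e \<in> E"
  shows "\<exists>d'\<in>D. \<exists>e'\<in>E. 2 ^ k * (e' - d') \<le> e - d"
proof (induction k)
  case 0
  then show ?case using assms(2,3) by auto
next
  case (Suc k)
  then obtain d1 e1 where d1: "d1 \<in> D" "e1 \<in> E" "2 ^ k * (e1 - d1) \<le> e - d" by blast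
  then obtain d' e' where d': "d' \<in> D" "e' \<in> E" "2 * (e' - d') \<le> e1 - d1"
    using assms(1) unfolding gaps_halvable_def by blast
  have "2 ^ Suc k * (e' - d') = 2 ^ k * (2 * (e' - d'))" by simp
  also have "\<dots> \<le> 2 ^ k * (e1 - d1)" using d'(3) by (simp add: mult_left_mono)
  finally show ?case using d1(3) d' by (meson order_trans)
qed

lemma Betw_diff_gap_infinitesimal:
  assumes "gaps_halvable D E" "a \<in> Betw F D E" "b \<in> Betw F D E"
  shows "gap_infinitesimal D E (a - b)"
  unfolding gap_infinitesimal_def
proof (intro ballI allI)
  fix e d n assume "e \<in> E" "d \<in> D"
  then obtain d' e' where d': "d' \<in> D" "e' \<in> E" "2 ^ n * (e' - d') \<le> e - d"
    using gaps_halvable_power[OF assms(1)] by blast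
  then have "d' < a" "a < e'" "d' < b" "b < e'" using assms(2,3) unfolding Betw_def by auto
  then have "\<bar>a - b\<bar> < e' - d'" by (auto simp: abs_less_iff)
  have "of_nat n * \<bar>a - b\<bar> \<le> 2 ^ n * \<bar>a - b\<bar>"
    by (metis mult_right_mono abs_ge_zero less_exp less_imp_le of_nat_le_iff of_nat_numeral
        of_nat_power)
  also have "\<dots> < 2 ^ n * (e' - d')" using \<open>\<bar>a - b\<bar> < e' - d'\<close> by simp
  also have "\<dots> \<le> e - d" by fact
  finally show "of_nat n * \<bar>a - b\<bar> < e - d" .
qed

lemma mem_Betw_if_gap_infinitesimal_diff:
  assumes "gap_open_above D E" "gap_open_below D E" "a \<in> Betw F D E"
    and "b \<in> F" "gap_infinitesimal D E (a - b)"
  shows "b \<in> Betw F D E"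
proof -
  have "d < b" if "d \<in> D" for d
  proof -
    obtain d' where "d' \<in> D" "d < d'" "\<not> gap_infinitesimal D E (d' - d)"
      using assms(1) \<open>d \<in> D\<close> unfolding gap_open_above_def by blast
    moreover from calculation have "d' < a" using assms(3) unfolding Betw_def by blast
    ultimately show ?thesis using gap_infinitesimal_abs_less[OF assms(5), of "d' - d"]
      by (auto simp: abs_less_iff)
  qed
  moreover have "b < e" if "e \<in> E" for e
  proof -
    obtain e' where "e' \<in> E" "e' < e" "\<not> gap_infinitesimal D E (e - e')"
      using assms(2) \<open>e \<in> E\<close> unfolding gap_open_below_def by blast
    moreover from calculation have "a < e'" using assms(3) unfolding Betw_def by blast
    ultimately show ?thesis using gap_infinitesimal_abs_less[OF assms(5), of "e - e'"]
      by (auto simp: abs_less_iff)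
  qed
  ultimately show ?thesis using assms(4) unfolding Betw_def by blast
qed

lemma Betw_eq_ballV_above_gaps:
  fixes D E :: "'a::linordered_field set"
  assumes "set_less D E" "gaps_halvable D E" "gap_open_above D E" "gap_open_below D E"
    and a: "a \<in> Betw UNIV D E"
  shows "Betw UNIV D E = ballV UNIV (above_gaps UNIV D E) a"
  using Betw_diff_gap_infinitesimal[OF assms(2) a]
    mem_Betw_if_gap_infinitesimal_diff[OF assms(3,4) a]
    mem_ballV_above_gaps_iff[OF subfield_UNIV _ assms(1)]
  by blast

subsection \<open>Ball complements\<close>

context
  fixes R B D E :: "'a::linordered_field set" and S and c
  assumes R: "subfield R" and c: "c \<in> R" and B: "B = ballV R S c"
    and bc: "ball_complement R B D E"
begin

lemma ball_complement_mem_if_vval_eq: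
  assumes "x \<in> D \<union> E" "y \<in> R" "vval (c - y) = vval (c - x)"
  shows "y < c \<Longrightarrow> y \<in> D" and "c < y \<Longrightarrow> y \<in> E"
proof -
  have "c \<in> B" using c unfolding B ballV_def by simp
  then have DE: "\<And>d. d \<in> D \<Longrightarrow> d < c \<and> d \<notin> B" "\<And>e. e \<in> E \<Longrightarrow> c < e \<and> e \<notin> B"
    using bc unfolding ball_complement_def set_less_def by blast+
  then have "x \<in> R - B" "c \<noteq> x" using assms(1) bc unfolding ball_complement_def by force+
  then have "y \<notin> B" if "c \<noteq> y" using assms(2,3) that unfolding B ballV_def by auto
  then show "y < c \<Longrightarrow> y \<in> D" and "c < y \<Longrightarrow> y \<in> E"
    using assms(2) DE bc unfolding ball_complement_def by (auto dest: less_asym)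
qed

lemma ball_complement_below_center: "d \<in> D \<Longrightarrow> d < c"
  and ball_complement_above_center: "e \<in> E \<Longrightarrow> c < e"
  using bc c unfolding B ball_complement_def set_less_def ballV_def by simp_all

lemma ball_complement_subset: "D \<union> E \<subseteq> R"
  using bc unfolding ball_complement_def by blast

lemma ball_complement_midpoint:
  shows "d \<in> D \<Longrightarrow> (d + c) / 2 \<in> D" and "e \<in> E \<Longrightarrow> (e + c) / 2 \<in> E"
proof -
  have val: "vval (c - (x + c) / 2) = vval (c - x)" for x
  proof -
    have "c - (x + c) / 2 = (c - x) / 2" by (simp add: field_simps)
    then show ?thesis by (simp only: vval_half)
  qed
  have mem: "(x + c) / 2 \<in> R" if "x \<in> D \<union> E" for x
    using subfield_midpoint[OF R _ c] ball_complement_subset that by blast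
  show "(d + c) / 2 \<in> D" if d: "d \<in> D"
    using ball_complement_mem_if_vval_eq(1)[OF _ mem val] ball_complement_below_center[OF d] d
    by simp
  show "(e + c) / 2 \<in> E" if e: "e \<in> E"
    using ball_complement_mem_if_vval_eq(2)[OF _ mem val] ball_complement_above_center[OF e] e
    by simp
qed

lemma ball_complement_reflection:
  shows "d \<in> D \<Longrightarrow> 2 * c - d \<in> E" and "e \<in> E \<Longrightarrow> 2 * c - e \<in> D"
proof -
  have val: "vval (c - (2 * c - x)) = vval (c - x)" for x
  proof -
    have "c - (2 * c - x) = - (c - x)" by simp
    then show ?thesis by (simp only: vval_minus)
  qed
  have mem: "2 * c - x \<in> R" if "x \<in> D \<union> E" for x
  proof -
    have "c + c - x \<in> R"
      using subfield_diff[OF R subfield_add[OF R c c]] ball_complement_subset that by blast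
    then show ?thesis by (simp only: mult_2)
  qed
  show "2 * c - d \<in> E" if d: "d \<in> D"
    using ball_complement_mem_if_vval_eq(2)[OF _ mem val] ball_complement_below_center[OF d] d
    by simp
  show "2 * c - e \<in> D" if e: "e \<in> E"
    using ball_complement_mem_if_vval_eq(1)[OF _ mem val] ball_complement_above_center[OF e] e
    by simp
qed

lemma ball_complement_gaps_halvable: "gaps_halvable D E"
  unfolding gaps_halvable_def
proof (intro ballI)
  fix d e assume "d \<in> D" "e \<in> E"
  moreover have "2 * ((e + c) / 2 - (d + c) / 2) \<le> e - d" by (simp add: field_simps)
  ultimately show "\<exists>d'\<in>D. \<exists>e'\<in>E. 2 * (e' - d') \<le> e - d"
    using ball_complement_midpoint by blast
qed

lemma ball_complement_gap_open_above: "gap_open_above D E"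
  unfolding gap_open_above_def
proof
  fix d assume d: "d \<in> D"
  have "\<not> gap_infinitesimal D E ((d + c) / 2 - d)"
  proof
    assume "gap_infinitesimal D E ((d + c) / 2 - d)"
    then have "of_nat 4 * \<bar>(d + c) / 2 - d\<bar> < (2 * c - d) - d"
      using d ball_complement_reflection(1)[OF d] unfolding gap_infinitesimal_def by blast
    then show False using ball_complement_below_center[OF d] by (simp add: field_simps)
  qed
  moreover have "d < (d + c) / 2" using ball_complement_below_center[OF d] by simp
  ultimately show "\<exists>d'\<in>D. d < d' \<and> \<not> gap_infinitesimal D E (d' - d)"
    using ball_complement_midpoint(1)[OF d] by blast
qed

lemma ball_complement_gap_open_below: "gap_open_below D E"
  unfolding gap_open_below_def
proof
  fix e assume e: "e \<in> E"
  have "\<not> gap_infinitesimal D E (e - (e + c) / 2)"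
  proof
    assume "gap_infinitesimal D E (e - (e + c) / 2)"
    then have "of_nat 4 * \<bar>e - (e + c) / 2\<bar> < e - (2 * c - e)"
      using e ball_complement_reflection(2)[OF e] unfolding gap_infinitesimal_def by blast
    then show False using ball_complement_above_center[OF e] by (simp add: field_simps)
  qed
  moreover have "(e + c) / 2 < e" using ball_complement_above_center[OF e] by simp
  ultimately show "\<exists>e'\<in>E. e' < e \<and> \<not> gap_infinitesimal D E (e - e')"
    using ball_complement_midpoint(2)[OF e] by blast
qed

end

subsection \<open>Non-ball cuts\<close>

lemma upper_cut_eqI:
  assumes cut: "is_cut R D E" and "B \<subseteq> D" "\<forall>x\<in>D. \<exists>y\<in>B. x \<le> y"
  shows "upper_cut R B = (D, E)"
proof -
  have "x \<in> D" if "x \<in> R" "y \<in> B" "x \<le> y" for x y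
    using that assms(2) cut unfolding is_cut_def set_less_def by (auto dest: leD)
  then have "{x\<in>R. \<exists>y\<in>B. x \<le> y} = D"
    using assms(3) cut unfolding is_cut_def by blast
  moreover have "R - D = E"
    using cut unfolding is_cut_def set_less_def by blast
  ultimately show ?thesis unfolding upper_cut_def Let_def by simp
qed

lemma lower_cut_eqI:
  assumes cut: "is_cut R D E" and "B \<subseteq> E" "\<forall>x\<in>E. \<exists>y\<in>B. y \<le> x"
  shows "lower_cut R B = (D, E)"
proof -
  have "x \<in> E" if "x \<in> R" "y \<in> B" "y \<le> x" for x y
    using that assms(2) cut unfolding is_cut_def set_less_def by (auto dest: leD)
  then have "{x\<in>R. \<exists>y\<in>B. y \<le> x} = E"
    using assms(3) cut unfolding is_cut_def by blast
  moreover have "R - E = D"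
    using cut unfolding is_cut_def set_less_def by blast
  ultimately show ?thesis unfolding lower_cut_def Let_def by simp
qed

lemma cut_gaps_halvable:
  assumes R: "subfield R" and cut: "is_cut R D E"
  shows "gaps_halvable D E"
  unfolding gaps_halvable_def
proof (intro ballI)
  fix d e assume "d \<in> D" "e \<in> E"
  moreover from calculation have "(d + e) / 2 \<in> D \<union> E"
    using cut subfield_midpoint[OF R] unfolding is_cut_def by blast
  moreover have "2 * (e - (d + e) / 2) \<le> e - d" "2 * ((d + e) / 2 - d) \<le> e - d"
    by (simp_all add: field_simps)
  ultimately show "\<exists>d'\<in>D. \<exists>e'\<in>E. 2 * (e' - d') \<le> e - d" by blast
qed

text \<open>If some d \<in> D is exceeded in D only by gap-infinitesimal amounts, D is the initial
segment generated by the ball of gap-infinitesimal neighbours of d.\<close>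

lemma non_ball_cut_gap_open_above:
  assumes R: "subfield R" and nb: "non_ball_cut R D E"
  shows "gap_open_above D E"
proof (rule ccontr)
  assume "\<not> gap_open_above D E"
  then obtain d where d: "d \<in> D"
    and small: "\<And>x. x \<in> D \<Longrightarrow> d < x \<Longrightarrow> gap_infinitesimal D E (x - d)"
    unfolding gap_open_above_def by blast
  have cut: "is_cut R D E" and DE: "set_less D E" and dR: "d \<in> R"
    using nb d unfolding non_ball_cut_def is_cut_def by auto
  define B where "B = ballV R (above_gaps R D E) d"
  have memB: "x \<in> B \<longleftrightarrow> x \<in> R \<and> gap_infinitesimal D E (d - x)" for x
    unfolding B_def using mem_ballV_above_gaps_iff[OF R dR DE] .
  have sub: "B \<subseteq> D"
  proof
    fix y assume "y \<in> B"
    then have "y \<in> R" "gap_infinitesimal D E (- (y - d))" using memB by auto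
    then show "y \<in> D"
      using cut not_gap_infinitesimal_gap[OF d] gap_infinitesimal_minus_iff
      unfolding is_cut_def by blast
  qed
  have cofinal: "\<forall>x\<in>D. \<exists>y\<in>B. x \<le> y"
  proof
    fix x assume x: "x \<in> D"
    show "\<exists>y\<in>B. x \<le> y"
    proof (cases "x \<le> d")
      case True
      then show ?thesis using memB dR gap_infinitesimal_zero[OF DE] by auto
    next
      case False
      then have "gap_infinitesimal D E (- (d - x))" using small x by simp
      then have "x \<in> B"
        using memB x cut gap_infinitesimal_minus_iff unfolding is_cut_def by blast
      then show ?thesis by blast
    qed
  qed
  have "is_ball R B"
    unfolding is_ball_def B_def using dR final_segment_above_gaps by blast
  then have "ball_cut R D E"
    using cut upper_cut_eqI[OF cut sub cofinal] unfolding ball_cut_def by auto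
  then show False using nb unfolding non_ball_cut_def by blast
qed

lemma non_ball_cut_gap_open_below:
  assumes R: "subfield R" and nb: "non_ball_cut R D E"
  shows "gap_open_below D E"
proof (rule ccontr)
  assume "\<not> gap_open_below D E"
  then obtain e where e: "e \<in> E"
    and small: "\<And>x. x \<in> E \<Longrightarrow> x < e \<Longrightarrow> gap_infinitesimal D E (e - x)"
    unfolding gap_open_below_def by blast
  have cut: "is_cut R D E" and DE: "set_less D E" and eR: "e \<in> R"
    using nb e unfolding non_ball_cut_def is_cut_def by auto
  define B where "B = ballV R (above_gaps R D E) e"
  have memB: "x \<in> B \<longleftrightarrow> x \<in> R \<and> gap_infinitesimal D E (e - x)" for x
    unfolding B_def using mem_ballV_above_gaps_iff[OF R eR DE] .
  have sub: "B \<subseteq> E"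
    using memB cut not_gap_infinitesimal_gap[OF _ e] unfolding is_cut_def by blast
  have cofinal: "\<forall>x\<in>E. \<exists>y\<in>B. y \<le> x"
  proof
    fix x assume x: "x \<in> E"
    show "\<exists>y\<in>B. y \<le> x"
    proof (cases "e \<le> x")
      case True
      then show ?thesis using memB eR gap_infinitesimal_zero[OF DE] by auto
    next
      case False
      then have "x \<in> B" using memB x cut small unfolding is_cut_def by auto
      then show ?thesis by blast
    qed
  qed
  have "is_ball R B"
    unfolding is_ball_def B_def using eR final_segment_above_gaps by blast
  then have "ball_cut R D E"
    using cut lower_cut_eqI[OF cut sub cofinal] unfolding ball_cut_def by auto
  then show False using nb unfolding non_ball_cut_def by blast
qed

theorem lemma4p1:
  fixes R D E :: "'a::linordered_field set"
  assumes "subfield R"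
    and "D \<subseteq> R" and "E \<subseteq> R" and "D \<noteq> {}" and "E \<noteq> {}"
    and "set_less D E"
    and "(non_ball_cut R D E \<and> Betw UNIV D E \<noteq> {})
         \<or> (\<exists>B. is_ball R B \<and> ball_complement R B D E)"
  shows "\<forall>a\<in>Betw UNIV D E.
           Betw UNIV D E =
           ballV UNIV {\<gamma>\<in>vgroup UNIV. \<forall>\<delta>\<in>vdiff E D. vclass_less \<delta> \<gamma>} a"
proof
  fix a assume a: "a \<in> Betw UNIV D E"
  from assms(7) have "gaps_halvable D E \<and> gap_open_above D E \<and> gap_open_below D E"
  proof
    assume "non_ball_cut R D E \<and> Betw UNIV D E \<noteq> {}"
    then have nb: "non_ball_cut R D E" by blast
    then have "is_cut R D E" unfolding non_ball_cut_def by blast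
    then show ?thesis
      using cut_gaps_halvable[OF assms(1)] non_ball_cut_gap_open_above[OF assms(1) nb]
        non_ball_cut_gap_open_below[OF assms(1) nb] by blast
  next
    assume "\<exists>B. is_ball R B \<and> ball_complement R B D E"
    then obtain B c S where bc: "c \<in> R" "B = ballV R S c" "ball_complement R B D E"
      unfolding is_ball_def by blast
    show ?thesis
      using ball_complement_gaps_halvable[OF assms(1) bc]
        ball_complement_gap_open_above[OF assms(1) bc]
        ball_complement_gap_open_below[OF assms(1) bc] by blast
  qed
  then have "Betw UNIV D E = ballV UNIV (above_gaps UNIV D E) a"
    using Betw_eq_ballV_above_gaps[OF assms(6) _ _ _ a] by blast
  then show "Betw UNIV D E = ballV UNIV {\<gamma>\<in>vgroup UNIV. \<forall>\<delta>\<in>vdiff E D. vclass_less \<delta> \<gamma>} a"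
    unfolding above_gaps_def .
qed

end
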